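(* Let $D_\ast,E_\ast$ be chain complexes, $j$ an integer and $\varphi:D_\ast\to E_\ast$ a chain homotopy equivalence such that $\varphi_i:D_i\to E_i$ is an isomorphism for all $i\leq j-1$. Then there is a chain homotopy inverse $\psi:E_\ast\to D_\ast$ of $\varphi$ with $\psi_i=\varphi_i^{-1}$ for all $i\leq j-1$. *)

theory Defs
  imports Main
begin

text \<open>A module is represented as a
carrier set M inside an ambient abelian group 'a, with scalar action s. Maps are only constrained on carriers.\<close>

definition module_on :: "('r::ring_1 \<Rightarrow> 'a::ab_group_add \<Rightarrow> 'a) \<Rightarrow> 'a set \<Rightarrow> bool" where
  "module_on s M \<longleftrightarrow> 0 \<in> M \<and> (\<forall>x\<in>M. \<forall>y\<in>M. x + y \<in> M) \<and> (\<forall>x\<in>M. - x \<in> M)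
     \<and> (\<forall>r. \<forall>x\<in>M. s r x \<in> M)
     \<and> (\<forall>r. \<forall>x\<in>M. \<forall>y\<in>M. s r (x + y) = s r x + s r y)
     \<and> (\<forall>r r'. \<forall>x\<in>M. s (r + r') x = s r x + s r' x)
     \<and> (\<forall>r r'. \<forall>x\<in>M. s (r * r') x = s r (s r' x))
     \<and> (\<forall>x\<in>M. s 1 x = x)"

definition linear_on :: "('r::ring_1 \<Rightarrow> 'a::ab_group_add \<Rightarrow> 'a) \<Rightarrow> 'a set \<Rightarrow>
    ('r \<Rightarrow> 'b::ab_group_add \<Rightarrow> 'b) \<Rightarrow> 'b set \<Rightarrow> ('a \<Rightarrow> 'b) \<Rightarrow> bool" where
  "linear_on s M t N f \<longleftrightarrow> (\<forall>x\<in>M. f x \<in> N) \<and> (\<forall>x\<in>M. \<forall>y\<in>M. f (x + y) = f x + f y)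
     \<and> (\<forall>r. \<forall>x\<in>M. f (s r x) = t r (f x))"

definition chain_complex :: "('r::ring_1 \<Rightarrow> 'a::ab_group_add \<Rightarrow> 'a) \<Rightarrow> (int \<Rightarrow> 'a set) \<Rightarrow>
    (int \<Rightarrow> 'a \<Rightarrow> 'a) \<Rightarrow> bool" where
  "chain_complex s C d \<longleftrightarrow> (\<forall>i. module_on s (C i))
     \<and> (\<forall>i. linear_on s (C i) s (C (i - 1)) (d i))
     \<and> (\<forall>i. \<forall>x\<in>C i. d (i - 1) (d i x) = 0)"

definition chain_map :: "('r::ring_1 \<Rightarrow> 'a::ab_group_add \<Rightarrow> 'a) \<Rightarrow> (int \<Rightarrow> 'a set) \<Rightarrow> (int \<Rightarrow> 'a \<Rightarrow> 'a) \<Rightarrow>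
    ('r \<Rightarrow> 'b::ab_group_add \<Rightarrow> 'b) \<Rightarrow> (int \<Rightarrow> 'b set) \<Rightarrow> (int \<Rightarrow> 'b \<Rightarrow> 'b) \<Rightarrow>
    (int \<Rightarrow> 'a \<Rightarrow> 'b) \<Rightarrow> bool" where
  "chain_map s C d t E e f \<longleftrightarrow> (\<forall>i. linear_on s (C i) t (E i) (f i))
     \<and> (\<forall>i. \<forall>x\<in>C i. e i (f i x) = f (i - 1) (d i x))"

definition chain_homotopic :: "('r::ring_1 \<Rightarrow> 'a::ab_group_add \<Rightarrow> 'a) \<Rightarrow> (int \<Rightarrow> 'a set) \<Rightarrow> (int \<Rightarrow> 'a \<Rightarrow> 'a) \<Rightarrow>
    ('r \<Rightarrow> 'b::ab_group_add \<Rightarrow> 'b) \<Rightarrow> (int \<Rightarrow> 'b set) \<Rightarrow> (int \<Rightarrow> 'b \<Rightarrow> 'b) \<Rightarrow>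
    (int \<Rightarrow> 'a \<Rightarrow> 'b) \<Rightarrow> (int \<Rightarrow> 'a \<Rightarrow> 'b) \<Rightarrow> bool" where
  "chain_homotopic s C d t E e f g \<longleftrightarrow> (\<exists>h. (\<forall>i. linear_on s (C i) t (E (i + 1)) (h i))
     \<and> (\<forall>i. \<forall>x\<in>C i. f i x - g i x = e (i + 1) (h i x) + h (i - 1) (d i x)))"

definition chain_homotopy_inverse :: "('r::ring_1 \<Rightarrow> 'a::ab_group_add \<Rightarrow> 'a) \<Rightarrow> (int \<Rightarrow> 'a set) \<Rightarrow> (int \<Rightarrow> 'a \<Rightarrow> 'a) \<Rightarrow>
    ('r \<Rightarrow> 'b::ab_group_add \<Rightarrow> 'b) \<Rightarrow> (int \<Rightarrow> 'b set) \<Rightarrow> (int \<Rightarrow> 'b \<Rightarrow> 'b) \<Rightarrow>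
    (int \<Rightarrow> 'a \<Rightarrow> 'b) \<Rightarrow> (int \<Rightarrow> 'b \<Rightarrow> 'a) \<Rightarrow> bool" where
  "chain_homotopy_inverse s C d t E e \<phi> \<psi> \<longleftrightarrow>
     chain_map s C d t E e \<phi> \<and> chain_map t E e s C d \<psi>
     \<and> chain_homotopic s C d s C d (\<lambda>i x. \<psi> i (\<phi> i x)) (\<lambda>i x. x)
     \<and> chain_homotopic t E e t E e (\<lambda>i y. \<phi> i (\<psi> i y)) (\<lambda>i y. y)"

definition chain_homotopy_equivalence :: "('r::ring_1 \<Rightarrow> 'a::ab_group_add \<Rightarrow> 'a) \<Rightarrow> (int \<Rightarrow> 'a set) \<Rightarrow> (int \<Rightarrow> 'a \<Rightarrow> 'a) \<Rightarrow>
    ('r \<Rightarrow> 'b::ab_group_add \<Rightarrow> 'b) \<Rightarrow> (int \<Rightarrow> 'b set) \<Rightarrow> (int \<Rightarrow> 'b \<Rightarrow> 'b) \<Rightarrow>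
    (int \<Rightarrow> 'a \<Rightarrow> 'b) \<Rightarrow> bool" where
  "chain_homotopy_equivalence s C d t E e \<phi> \<longleftrightarrow> (\<exists>\<psi>. chain_homotopy_inverse s C d t E e \<phi> \<psi>)"

end

theory Submission
  imports Defs
begin

(* Let g be any homotopy inverse of \<phi>, with g \<phi> - 1 = d h + h d. For every map H of degree +1,
   g - (d H + H d) is a chain map homotopic to g, hence again a homotopy inverse of \<phi>.
   Taking H = h \<phi>^-1 in degrees below j and H = 0 elsewhere, the correction in those degrees is
   d h \<phi>^-1 + h \<phi>^-1 d = (d h + h d) \<phi>^-1 = g - \<phi>^-1, since \<phi>^-1 commutes with d there. *)

lemma module_on_zero: "module_on s M \<Longrightarrow> 0 \<in> M"
  and module_on_add: "module_on s M \<Longrightarrow> x \<in> M \<Longrightarrow> y \<in> M \<Longrightarrow> x + y \<in> M"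
  and module_on_uminus: "module_on s M \<Longrightarrow> x \<in> M \<Longrightarrow> - x \<in> M"
  and module_on_scale: "module_on s M \<Longrightarrow> x \<in> M \<Longrightarrow> s r x \<in> M"
  and module_on_scale_add: "module_on s M \<Longrightarrow> x \<in> M \<Longrightarrow> y \<in> M \<Longrightarrow> s r (x + y) = s r x + s r y"
  unfolding module_on_def by blast+

lemma module_on_scale_zero: "module_on s M \<Longrightarrow> s r 0 = 0"
  using module_on_scale_add[of s M 0 0 r] module_on_zero by fastforce

lemma module_on_scale_uminus: "module_on s M \<Longrightarrow> x \<in> M \<Longrightarrow> s r (- x) = - s r x"
  using module_on_scale_add[of s M x "- x" r]
  by (simp add: module_on_scale_zero module_on_uminus minus_unique)

lemma linear_on_mem: "linear_on s M t N f \<Longrightarrow> x \<in> M \<Longrightarrow> f x \<in> N"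
  and linear_on_add: "linear_on s M t N f \<Longrightarrow> x \<in> M \<Longrightarrow> y \<in> M \<Longrightarrow> f (x + y) = f x + f y"
  unfolding linear_on_def by blast+

lemma linear_on_0: "linear_on s M t N f \<Longrightarrow> module_on s M \<Longrightarrow> f 0 = 0"
  using linear_on_add[of s M t N f 0 0] module_on_zero by fastforce

lemma linear_on_neg: "linear_on s M t N f \<Longrightarrow> module_on s M \<Longrightarrow> x \<in> M \<Longrightarrow> f (- x) = - f x"
  using linear_on_add[of s M t N f x "- x"]
  by (simp add: linear_on_0 module_on_uminus minus_unique)

lemma linear_on_diff:
  "linear_on s M t N f \<Longrightarrow> module_on s M \<Longrightarrow> x \<in> M \<Longrightarrow> y \<in> M \<Longrightarrow> f (x - y) = f x - f y"
  using linear_on_add[of s M t N f x "- y"]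
  by (simp add: linear_on_neg module_on_uminus)

lemma linear_on_zero: "module_on t N \<Longrightarrow> linear_on s M t N (\<lambda>x. 0)"
  unfolding linear_on_def by (simp add: module_on_zero module_on_scale_zero)

lemma linear_on_compose:
  "linear_on s M t N f \<Longrightarrow> linear_on t N u P g \<Longrightarrow> linear_on s M u P (\<lambda>x. g (f x))"
  unfolding linear_on_def by auto

lemma linear_on_compose_add:
  "linear_on s M t N f \<Longrightarrow> linear_on s M t N g \<Longrightarrow> module_on t N
    \<Longrightarrow> linear_on s M t N (\<lambda>x. f x + g x)"
  unfolding linear_on_def by (auto simp: module_on_add module_on_scale_add algebra_simps)

lemma linear_on_compose_neg:
  "linear_on s M t N f \<Longrightarrow> module_on t N \<Longrightarrow> linear_on s M t N (\<lambda>x. - f x)"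
  unfolding linear_on_def by (auto simp: module_on_uminus module_on_scale_uminus)

lemma linear_on_compose_sub:
  "linear_on s M t N f \<Longrightarrow> linear_on s M t N g \<Longrightarrow> module_on t N
    \<Longrightarrow> linear_on s M t N (\<lambda>x. f x - g x)"
  using linear_on_compose_add[of s M t N f "\<lambda>x. - g x", OF _ linear_on_compose_neg] by simp

lemma linear_on_the_inv_into:
  assumes f: "linear_on s M t N f" and bij: "bij_betw f M N" and M: "module_on s M"
  shows "linear_on t N s M (the_inv_into M f)"
  unfolding linear_on_def
proof (intro conjI ballI allI)
  let ?g = "the_inv_into M f"
  have inj: "inj_on f M"
    using bij bij_betw_def by blast
  have g_mem: "\<And>y. y \<in> N \<Longrightarrow> ?g y \<in> M"
    using bij bij_betw_the_inv_into bij_betwE by metis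
  have f_g: "\<And>y. y \<in> N \<Longrightarrow> f (?g y) = y"
    using bij f_the_inv_into_f_bij_betw by metis
  show "?g y \<in> M" if "y \<in> N" for y
    using g_mem that .
  show "?g (x + y) = ?g x + ?g y" if "x \<in> N" "y \<in> N" for x y
    using linear_on_add[OF f g_mem g_mem] the_inv_into_f_f[OF inj module_on_add[OF M g_mem g_mem]]
      f_g that by metis
  show "?g (t r y) = s r (?g y)" if "y \<in> N" for r y
    using f g_mem[OF that] f_g[OF that] the_inv_into_f_f[OF inj module_on_scale[OF M g_mem[OF that]]]
    unfolding linear_on_def by metis
qed

lemma chain_complexD:
  assumes "chain_complex s C d"
  shows "module_on s (C i)" and "linear_on s (C i) s (C (i - 1)) (d i)"
    and "linear_on s (C (i + 1)) s (C i) (d (i + 1))"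
    and "x \<in> C i \<Longrightarrow> d (i - 1) (d i x) = 0"
  using assms unfolding chain_complex_def by (auto dest: spec[of _ "i + 1"])

lemma chain_mapD:
  assumes "chain_map s C d t E e f"
  shows "linear_on s (C i) t (E i) (f i)" and "x \<in> C i \<Longrightarrow> e i (f i x) = f (i - 1) (d i x)"
  using assms unfolding chain_map_def by auto

lemma chain_homotopic_sym:
  assumes E: "chain_complex t E e" and fg: "chain_homotopic s C d t E e f g"
  shows "chain_homotopic s C d t E e g f"
proof -
  obtain h where h: "\<And>i. linear_on s (C i) t (E (i + 1)) (h i)"
    and fg_eq: "\<And>i x. x \<in> C i \<Longrightarrow> f i x - g i x = e (i + 1) (h i x) + h (i - 1) (d i x)"
    using fg unfolding chain_homotopic_def by blast
  have "g i x - f i x = e (i + 1) (- h i x) + - h (i - 1) (d i x)" if "x \<in> C i" for i x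
    using fg_eq[OF that] linear_on_neg[OF chain_complexD(3,1)[OF E] linear_on_mem[OF h that]]
    by (simp add: algebra_simps)
  then show ?thesis
    unfolding chain_homotopic_def
    using linear_on_compose_neg[OF h chain_complexD(1)[OF E]]
    by (intro exI[of _ "\<lambda>i x. - h i x"]) auto
qed

lemma chain_homotopic_trans:
  assumes E: "chain_complex t E e"
    and fg: "chain_homotopic s C d t E e f g" and gk: "chain_homotopic s C d t E e g k"
  shows "chain_homotopic s C d t E e f k"
proof -
  obtain h where h: "\<And>i. linear_on s (C i) t (E (i + 1)) (h i)"
    and fg_eq: "\<And>i x. x \<in> C i \<Longrightarrow> f i x - g i x = e (i + 1) (h i x) + h (i - 1) (d i x)"
    using fg unfolding chain_homotopic_def by blast
  obtain h' where h': "\<And>i. linear_on s (C i) t (E (i + 1)) (h' i)"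
    and gk_eq: "\<And>i x. x \<in> C i \<Longrightarrow> g i x - k i x = e (i + 1) (h' i x) + h' (i - 1) (d i x)"
    using gk unfolding chain_homotopic_def by blast
  have "f i x - k i x = e (i + 1) (h i x + h' i x) + (h (i - 1) (d i x) + h' (i - 1) (d i x))"
    if "x \<in> C i" for i x
    using fg_eq[OF that] gk_eq[OF that]
      linear_on_add[OF chain_complexD(3)[OF E] linear_on_mem[OF h that] linear_on_mem[OF h' that]]
    by (simp add: algebra_simps)
  then show ?thesis
    unfolding chain_homotopic_def
    using linear_on_compose_add[OF h h' chain_complexD(1)[OF E]]
    by (intro exI[of _ "\<lambda>i x. h i x + h' i x"]) auto
qed

lemma chain_homotopic_compose_right:
  assumes \<phi>: "chain_map s' C' d' s C d \<phi>" and fg: "chain_homotopic s C d t E e f g"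
  shows "chain_homotopic s' C' d' t E e (\<lambda>i x. f i (\<phi> i x)) (\<lambda>i x. g i (\<phi> i x))"
proof -
  obtain h where h: "\<And>i. linear_on s (C i) t (E (i + 1)) (h i)"
    and fg_eq: "\<And>i x. x \<in> C i \<Longrightarrow> f i x - g i x = e (i + 1) (h i x) + h (i - 1) (d i x)"
    using fg unfolding chain_homotopic_def by blast
  show ?thesis
    unfolding chain_homotopic_def
    using linear_on_compose[OF chain_mapD(1)[OF \<phi>] h]
      fg_eq[OF linear_on_mem[OF chain_mapD(1)[OF \<phi>]]] chain_mapD(2)[OF \<phi>]
    by (intro exI[of _ "\<lambda>i x. h i (\<phi> i x)"]) auto
qed

lemma chain_homotopic_compose_left:
  assumes C': "chain_complex s' C' d'" and C: "chain_complex s C d"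
    and \<phi>: "chain_map s C d t E e \<phi>" and f: "chain_map s' C' d' s C d f" and g: "chain_map s' C' d' s C d g"
    and fg: "chain_homotopic s' C' d' s C d f g"
  shows "chain_homotopic s' C' d' t E e (\<lambda>i x. \<phi> i (f i x)) (\<lambda>i x. \<phi> i (g i x))"
proof -
  obtain h where h: "\<And>i. linear_on s' (C' i) s (C (i + 1)) (h i)"
    and fg_eq: "\<And>i x. x \<in> C' i \<Longrightarrow> f i x - g i x = d (i + 1) (h i x) + h (i - 1) (d' i x)"
    using fg unfolding chain_homotopic_def by blast
  have "\<phi> i (f i x) - \<phi> i (g i x) = e (i + 1) (\<phi> (i + 1) (h i x)) + \<phi> i (h (i - 1) (d' i x))"
    if x: "x \<in> C' i" for i x
  proof -
    have hx: "h i x \<in> C (i + 1)"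
      using linear_on_mem[OF h x] .
    have hdx: "h (i - 1) (d' i x) \<in> C i"
      using linear_on_mem[OF h linear_on_mem[OF chain_complexD(2)[OF C'] x]] by simp
    have "\<phi> i (f i x) - \<phi> i (g i x) = \<phi> i (f i x - g i x)"
      using linear_on_diff[OF chain_mapD(1)[OF \<phi>] chain_complexD(1)[OF C]]
        linear_on_mem[OF chain_mapD(1)[OF f] x] linear_on_mem[OF chain_mapD(1)[OF g] x] by simp
    also have "\<dots> = \<phi> i (d (i + 1) (h i x)) + \<phi> i (h (i - 1) (d' i x))"
      using fg_eq[OF x] linear_on_add[OF chain_mapD(1)[OF \<phi>]
        linear_on_mem[OF chain_complexD(3)[OF C] hx] hdx] by simp
    also have "\<phi> i (d (i + 1) (h i x)) = e (i + 1) (\<phi> (i + 1) (h i x))"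
      using chain_mapD(2)[OF \<phi> hx] by simp
    finally show ?thesis .
  qed
  then show ?thesis
    unfolding chain_homotopic_def
    using linear_on_compose[OF h chain_mapD(1)[OF \<phi>]]
    by (intro exI[of _ "\<lambda>i x. \<phi> (i + 1) (h i x)"]) auto
qed

lemma chain_homotopic_chain_map:
  assumes C: "chain_complex s C d" and E: "chain_complex t E e"
    and f: "\<And>i. linear_on s (C i) t (E i) (f i)" and g: "chain_map s C d t E e g"
    and fg: "chain_homotopic s C d t E e f g"
  shows "chain_map s C d t E e f"
proof -
  obtain h where h: "\<And>i. linear_on s (C i) t (E (i + 1)) (h i)"
    and fg_eq: "\<And>i x. x \<in> C i \<Longrightarrow> f i x - g i x = e (i + 1) (h i x) + h (i - 1) (d i x)"
    using fg unfolding chain_homotopic_def by blast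
  have "e i (f i x) = f (i - 1) (d i x)" if x: "x \<in> C i" for i x
  proof -
    have dx: "d i x \<in> C (i - 1)"
      using linear_on_mem[OF chain_complexD(2)[OF C] x] .
    have hx: "h i x \<in> E (i + 1)"
      using linear_on_mem[OF h x] .
    have hdx: "h (i - 1) (d i x) \<in> E i"
      using linear_on_mem[OF h dx] by simp
    have "e i (f i x) = e i (g i x + (e (i + 1) (h i x) + h (i - 1) (d i x)))"
      using fg_eq[OF x] by (simp add: algebra_simps)
    also have "\<dots> = g (i - 1) (d i x) + e i (h (i - 1) (d i x))"
      using linear_on_add[OF chain_complexD(2)[OF E]] linear_on_mem[OF chain_mapD(1)[OF g] x]
        linear_on_mem[OF chain_complexD(3)[OF E] hx] hdx module_on_add[OF chain_complexD(1)[OF E]]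
        chain_complexD(4)[OF E hx] chain_mapD(2)[OF g x]
      by simp
    also have "\<dots> = f (i - 1) (d i x)"
      using fg_eq[OF dx] chain_complexD(4)[OF C x]
        linear_on_0[OF h chain_complexD(1)[OF C], of "i - 1 - 1"]
      by (simp add: algebra_simps)
    finally show ?thesis .
  qed
  then show ?thesis
    unfolding chain_map_def using f by blast
qed

lemma chain_homotopy_inverse_perturb:
  assumes D: "chain_complex s D dD" and E: "chain_complex t E dE"
    and g: "chain_homotopy_inverse s D dD t E dE \<phi> g"
    and H: "\<And>i. linear_on t (E i) s (D (i + 1)) (H i)"
  shows "chain_homotopy_inverse s D dD t E dE \<phi>
           (\<lambda>i y. g i y - (dD (i + 1) (H i y) + H (i - 1) (dE i y)))"
    (is "chain_homotopy_inverse s D dD t E dE \<phi> ?\<psi>")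
proof -
  have \<phi>: "chain_map s D dD t E dE \<phi>" and g_map: "chain_map t E dE s D dD g"
    and g\<phi>: "chain_homotopic s D dD s D dD (\<lambda>i x. g i (\<phi> i x)) (\<lambda>i x. x)"
    and \<phi>g: "chain_homotopic t E dE t E dE (\<lambda>i y. \<phi> i (g i y)) (\<lambda>i y. y)"
    using g unfolding chain_homotopy_inverse_def by blast+
  have H': "linear_on t (E (i - 1)) s (D i) (H (i - 1))" for i
    using H[of "i - 1"] by simp
  have \<psi>_linear: "linear_on t (E i) s (D i) (?\<psi> i)" for i
  proof -
    have "linear_on t (E i) s (D i) (\<lambda>y. dD (i + 1) (H i y))"
      using linear_on_compose[OF H chain_complexD(3)[OF D]] .
    moreover have "linear_on t (E i) s (D i) (\<lambda>y. H (i - 1) (dE i y))"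
      using linear_on_compose[OF chain_complexD(2)[OF E] H'] .
    ultimately show ?thesis
      by (intro linear_on_compose_sub linear_on_compose_add chain_mapD(1)[OF g_map] chain_complexD(1)[OF D])
  qed
  have "chain_homotopic t E dE s D dD g ?\<psi>"
    unfolding chain_homotopic_def using H by (intro exI[of _ H]) simp
  then have \<psi>_g: "chain_homotopic t E dE s D dD ?\<psi> g"
    by (rule chain_homotopic_sym[OF D])
  have \<psi>_map: "chain_map t E dE s D dD ?\<psi>"
    using chain_homotopic_chain_map[OF E D \<psi>_linear g_map \<psi>_g] .
  have "chain_homotopic s D dD s D dD (\<lambda>i x. ?\<psi> i (\<phi> i x)) (\<lambda>i x. x)"
    using chain_homotopic_trans[OF D chain_homotopic_compose_right[OF \<phi> \<psi>_g] g\<phi>] .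
  moreover have "chain_homotopic t E dE t E dE (\<lambda>i y. \<phi> i (?\<psi> i y)) (\<lambda>i y. y)"
    using chain_homotopic_trans[OF E chain_homotopic_compose_left[OF E D \<phi> \<psi>_map g_map \<psi>_g] \<phi>g] .
  ultimately show ?thesis
    unfolding chain_homotopy_inverse_def using \<phi> \<psi>_map by blast
qed

lemma homotopy_corrected_inverse_eq_the_inv_into:
  assumes D: "chain_complex s D dD" and \<phi>: "chain_map s D dD t E dE \<phi>"
    and g\<phi>: "\<And>x. x \<in> D i \<Longrightarrow> g i (\<phi> i x) - x = dD (i + 1) (h i x) + h (i - 1) (dD i x)"
    and bij: "bij_betw (\<phi> i) (D i) (E i)" and bij': "bij_betw (\<phi> (i - 1)) (D (i - 1)) (E (i - 1))"
    and y: "y \<in> E i"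
  shows "g i y - (dD (i + 1) (h i (the_inv_into (D i) (\<phi> i) y))
           + h (i - 1) (the_inv_into (D (i - 1)) (\<phi> (i - 1)) (dE i y)))
         = the_inv_into (D i) (\<phi> i) y"
proof -
  define x where "x = the_inv_into (D i) (\<phi> i) y"
  have x: "x \<in> D i" and y_eq: "y = \<phi> i x"
    unfolding x_def using bij y
    by (auto simp: bij_betw_def the_inv_into_into f_the_inv_into_f)
  have "the_inv_into (D (i - 1)) (\<phi> (i - 1)) (dE i y) = dD i x"
    using y_eq chain_mapD(2)[OF \<phi> x] linear_on_mem[OF chain_complexD(2)[OF D] x] bij'
    by (simp add: bij_betw_def the_inv_into_f_f)
  moreover have "g i y = x + (dD (i + 1) (h i x) + h (i - 1) (dD i x))"
    using g\<phi>[OF x] y_eq by (simp add: algebra_simps)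
  ultimately show ?thesis
    by (simp add: x_def[symmetric])
qed

theorem lemma6p5:
  fixes s :: "'r::ring_1 \<Rightarrow> 'a::ab_group_add \<Rightarrow> 'a" and D :: "int \<Rightarrow> 'a set" and dD :: "int \<Rightarrow> 'a \<Rightarrow> 'a"
    and t :: "'r \<Rightarrow> 'b::ab_group_add \<Rightarrow> 'b" and E :: "int \<Rightarrow> 'b set" and dE :: "int \<Rightarrow> 'b \<Rightarrow> 'b"
    and \<phi> :: "int \<Rightarrow> 'a \<Rightarrow> 'b" and j :: int
  assumes "chain_complex s D dD" and "chain_complex t E dE"
    and "chain_homotopy_equivalence s D dD t E dE \<phi>"
    and "\<forall>i \<le> j - 1. bij_betw (\<phi> i) (D i) (E i)"
  shows "\<exists>\<psi>. chain_homotopy_inverse s D dD t E dE \<phi> \<psi>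
           \<and> (\<forall>i \<le> j - 1. \<forall>y\<in>E i. \<psi> i y = the_inv_into (D i) (\<phi> i) y)"
proof -
  obtain g where g: "chain_homotopy_inverse s D dD t E dE \<phi> g"
    using assms(3) unfolding chain_homotopy_equivalence_def by blast
  then obtain h where h: "\<And>i. linear_on s (D i) s (D (i + 1)) (h i)"
    and g\<phi>: "\<And>i x. x \<in> D i \<Longrightarrow> g i (\<phi> i x) - x = dD (i + 1) (h i x) + h (i - 1) (dD i x)"
    unfolding chain_homotopy_inverse_def chain_homotopic_def by blast
  have \<phi>: "chain_map s D dD t E dE \<phi>"
    using g unfolding chain_homotopy_inverse_def by blast
  define H where "H i = (if i \<le> j - 1 then (\<lambda>y. h i (the_inv_into (D i) (\<phi> i) y)) else (\<lambda>y. 0))"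
    for i
  have H: "linear_on t (E i) s (D (i + 1)) (H i)" for i
    using assms(4) chain_mapD(1)[OF \<phi>] chain_complexD(1)[OF assms(1)]
    by (cases "i \<le> j - 1")
      (simp_all add: H_def linear_on_zero linear_on_compose[OF linear_on_the_inv_into h])
  define \<psi> where "\<psi> = (\<lambda>i y. g i y - (dD (i + 1) (H i y) + H (i - 1) (dE i y)))"
  have "chain_homotopy_inverse s D dD t E dE \<phi> \<psi>"
    unfolding \<psi>_def using chain_homotopy_inverse_perturb[OF assms(1,2) g H] .
  moreover have "\<psi> i y = the_inv_into (D i) (\<phi> i) y" if i: "i \<le> j - 1" and y: "y \<in> E i" for i y
  proof -
    have "bij_betw (\<phi> i) (D i) (E i)" and "bij_betw (\<phi> (i - 1)) (D (i - 1)) (E (i - 1))"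
      using assms(4) i by simp_all
    from homotopy_corrected_inverse_eq_the_inv_into[where g = g and h = h, OF assms(1) \<phi> g\<phi> this y]
    show ?thesis
      using i by (simp add: \<psi>_def H_def)
  qed
  ultimately show ?thesis
    by blast
qed

end
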